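(* Let $\mathcal{R}$ be a cell space, let $A\subseteq M$, let $e\in G/G_0$, and let $E,E'\subseteq G/G_0$. Then: (1) $A^{-\{G_0\}}=A$, $A^{+\{G_0\}}=A$, and $\partial_{\{G_0\}}A=\emptyset$. (2) $A^{-\{G_0,e\}}=A\cap(\cdot\triangleleft e)^{-1}(A)$, $A^{+\{G_0,e\}}=A\cup(\cdot\triangleleft e)^{-1}(A)$, and $\partial_{\{G_0,e\}}A=(A\setminus(\cdot\triangleleft e)^{-1}(A))\cup((\cdot\triangleleft e)^{-1}(A)\setminus A)$. (3) $(M\setminus A)^{-E}=M\setminus A^{+E}$ and $(M\setminus A)^{+E}=M\setminus A^{-E}$. (4) If $E\subseteq E'$, then $A^{-E}\supseteq A^{-E'}$, $A^{+E}\subseteq A^{+E'}$, and $\partial_E A\subseteq\partial_{E'}A$. (5) If $G_0\in E$, then $A^{-E}\subseteq A\subseteq A^{+E}$. (6) If $G_0\in E$ and $A$ is finite, then $A^{-E}$ is finite. (7) If $G_0$, $A$ and $E$ are finite, then $A^{+E}$ and $\partial_E A$ are finite; more precisely $|A^{+E}|\leq|G_0|\cdot|A|\cdot|E|$. (8) If $g\in G$ and $G_0\cdot E\subseteq E$, then $g\triangleright A^{-E}=(g\triangleright A)^{-E}$, $g\triangleright A^{+E}=(g\triangleright A)^{+E}$, and $g\triangleright\partial_E A=\partial_E(g\triangleright A)$. (9) If $m\in M$, $G_0\cdot E\subseteq E$, and $\iota\colon M\to G/G_0$, $m'\mapsto G_{m_0,m'}$, then $m\triangleleft\iota(A^{-E})=(m\triangleleft\iota(A))^{-E}$,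 $m\triangleleft\iota(A^{+E})=(m\triangleleft\iota(A))^{+E}$, and $m\triangleleft\iota(\partial_E A)=\partial_E(m\triangleleft\iota(A))$.
   Context: A cell space $\mathcal{R}$ consists of a group $G$ acting transitively on the left on a nonempty set $M$ via $\triangleright$, a point $m_0\in M$ and a family $(g_{m_0,m})_{m\in M}$ in $G$ with $g_{m_0,m}\triangleright m_0=m$. $G_0$ is the stabiliser of $m_0$, $G/G_0$ the set of left cosets, with $G$ acting by $g\cdot hG_0=ghG_0$ (so $G_0\cdot E=\{g_0\cdot e:g_0\in G_0,e\in E\}$). For $m,m'\in M$, $G_{m_0,m'}=\{g\in G: g\triangleright m_0=m'\}$ (a left coset of $G_0$). The right semi-action $\triangleleft\colon M\times G/G_0\to M$ is $m\triangleleft gG_0=g_{m_0,m}g\triangleright m_0$; for $E\subseteq G/G_0$, $m\triangleleft E=\{m\triangleleft e:e\in E\}$, $(\cdot\triangleleft e)^{-1}(A)=\{m\in M: m\triangleleft e\in A\}$, and $g\triangleright A=\{g\triangleright a:a\in A\}$. For $A\subseteq M$ and $E\subseteq G/G_0$: $A^{-E}=\{m\in M: m\triangleleft E\subseteq A\}$, $A^{+E}=\{m\in M:(m\triangleleft E)\cap A\neq\emptyset\}$, $\partial_E A=A^{+E}\setminus A^{-E}$. *)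

theory Defs
  imports "HOL-Algebra.Group_Action" "HOL-Algebra.Left_Coset"
begin

definition cell_space ::
  "('g, 'b) monoid_scheme \<Rightarrow> 'm set \<Rightarrow> ('g \<Rightarrow> 'm \<Rightarrow> 'm) \<Rightarrow> 'm \<Rightarrow> ('m \<Rightarrow> 'g) \<Rightarrow> bool" where
  "cell_space G M act m0 gc \<longleftrightarrow>
     transitive_action G M act \<and> M \<noteq> {} \<and> m0 \<in> M \<and>
     (\<forall>m\<in>M. gc m \<in> carrier G \<and> act (gc m) m0 = m)"

abbreviation G0 :: "('g, 'b) monoid_scheme \<Rightarrow> ('g \<Rightarrow> 'm \<Rightarrow> 'm) \<Rightarrow> 'm \<Rightarrow> 'g set" where
  "G0 G act m0 \<equiv> stabilizer G act m0"

abbreviation cosets :: "('g, 'b) monoid_scheme \<Rightarrow> ('g \<Rightarrow> 'm \<Rightarrow> 'm) \<Rightarrow> 'm \<Rightarrow> 'g set set" where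
  "cosets G act m0 \<equiv> lcosets\<^bsub>G\<^esub> (G0 G act m0)"

definition Gm :: "('g, 'b) monoid_scheme \<Rightarrow> ('g \<Rightarrow> 'm \<Rightarrow> 'm) \<Rightarrow> 'm \<Rightarrow> 'm \<Rightarrow> 'g set" where
  "Gm G act m0 m' = {g \<in> carrier G. act g m0 = m'}"

text \<open>Right semi-action: m \<triangleleft> gG_0 = (g_{m0,m} g) \<triangleright> m0 (independent of representative).\<close>
definition semi_act :: "('g, 'b) monoid_scheme \<Rightarrow> ('g \<Rightarrow> 'm \<Rightarrow> 'm) \<Rightarrow> 'm \<Rightarrow> ('m \<Rightarrow> 'g)
    \<Rightarrow> 'm \<Rightarrow> 'g set \<Rightarrow> 'm" where
  "semi_act G act m0 gc m e = act (gc m \<otimes>\<^bsub>G\<^esub> (SOME g. g \<in> e)) m0"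

definition erosion where
  "erosion G M act m0 gc A E = {m \<in> M. (semi_act G act m0 gc m) ` E \<subseteq> A}"

definition dilation where
  "dilation G M act m0 gc A E = {m \<in> M. (semi_act G act m0 gc m) ` E \<inter> A \<noteq> {}}"

definition boundary where
  "boundary G M act m0 gc A E = dilation G M act m0 gc A E - erosion G M act m0 gc A E"

definition preim where
  "preim G M act m0 gc e A = {m \<in> M. semi_act G act m0 gc m e \<in> A}"

definition stab_mult where
  "stab_mult G act m0 E = {g0 <#\<^bsub>G\<^esub> e | g0 e. g0 \<in> G0 G act m0 \<and> e \<in> E}"

end

theory Submission
  imports Defs
begin

text \<open>Apart from \<open>m \<triangleleft> G0 = m\<close> and the cardinality bound in (7), parts (1)--(7) only unfold
  the definitions.
  For the bound, write \<open>e = x G0\<close> and \<open>a = k \<triangleright> m0\<close>; then \<open>m \<mapsto> k\<^sup>-\<^sup>1 g_{m0,m} x\<close> embeds the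
  fibre \<open>{m. m \<triangleleft> e = a}\<close> into \<open>G0\<close>, and \<open>A^{+E}\<close> is the union of \<open>|A| |E|\<close> such fibres.
  For (8), \<open>g_{m0, g \<triangleright> m} = g g_{m0,m} h\<close> for some \<open>h \<in> G0\<close>, so
  \<open>(g \<triangleright> m) \<triangleleft> e = g \<triangleright> (m \<triangleleft> h e)\<close>, and \<open>G0 E = E\<close> shows that \<open>g\<close> carries the pattern
  \<open>m \<triangleleft> E\<close> onto \<open>(g \<triangleright> m) \<triangleleft> E\<close>. Part (9) is (8) for \<open>g = g_{m0,m}\<close>, since
  \<open>m \<triangleleft> G_{m0,m'} = g_{m0,m} \<triangleright> m'\<close>.\<close>

lemma image_Collect_eq_bij:
  assumes "bij_betw f M M" and "\<And>m. m \<in> M \<Longrightarrow> Q (f m) \<longleftrightarrow> P m"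
  shows "f ` {m \<in> M. P m} = {m \<in> M. Q m}"
proof
  have fM: "f ` M = M" using assms(1) by (simp add: bij_betw_def)
  show "f ` {m \<in> M. P m} \<subseteq> {m \<in> M. Q m}"
    using fM assms(2) by blast
  show "{m \<in> M. Q m} \<subseteq> f ` {m \<in> M. P m}"
  proof
    fix y assume y: "y \<in> {m \<in> M. Q m}"
    then obtain m where "m \<in> M" "y = f m" using fM by blast
    then show "y \<in> f ` {m \<in> M. P m}" using y assms(2) by blast
  qed
qed

lemma inj_on_image_subset_iff:
  assumes "inj_on f C" "A \<subseteq> C" "B \<subseteq> C"
  shows "f ` A \<subseteq> f ` B \<longleftrightarrow> A \<subseteq> B"
proof -
  have "f ` A \<subseteq> f ` B \<longleftrightarrow> f ` (A \<inter> B) = f ` A"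
    using inj_on_image_Int[OF assms] by blast
  also have "\<dots> \<longleftrightarrow> A \<inter> B = A"
    using assms by (intro inj_on_image_eq_iff) auto
  finally show ?thesis by blast
qed

lemma erosion_insert:
  "erosion G M act m0 gc A (insert e E) = preim G M act m0 gc e A \<inter> erosion G M act m0 gc A E"
  by (auto simp: erosion_def preim_def)

lemma dilation_insert:
  "dilation G M act m0 gc A (insert e E) = preim G M act m0 gc e A \<union> dilation G M act m0 gc A E"
  by (auto simp: dilation_def preim_def)

lemma erosion_subset: "erosion G M act m0 gc A E \<subseteq> M"
  by (auto simp: erosion_def)

lemma dilation_subset: "dilation G M act m0 gc A E \<subseteq> M"
  by (auto simp: dilation_def)

lemma boundary_subset: "boundary G M act m0 gc A E \<subseteq> M"
  by (auto simp: boundary_def dilation_def)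

lemma erosion_singleton: "erosion G M act m0 gc A {e} = preim G M act m0 gc e A"
  by (auto simp: erosion_def preim_def)

lemma dilation_singleton: "dilation G M act m0 gc A {e} = preim G M act m0 gc e A"
  by (auto simp: dilation_def preim_def)

lemma erosion_antimono: "E \<subseteq> E' \<Longrightarrow> erosion G M act m0 gc A E' \<subseteq> erosion G M act m0 gc A E"
  by (auto simp: erosion_def)

lemma dilation_mono: "E \<subseteq> E' \<Longrightarrow> dilation G M act m0 gc A E \<subseteq> dilation G M act m0 gc A E'"
  by (auto simp: dilation_def)

lemma boundary_mono: "E \<subseteq> E' \<Longrightarrow> boundary G M act m0 gc A E \<subseteq> boundary G M act m0 gc A E'"
  unfolding boundary_def by (intro Diff_mono dilation_mono erosion_antimono)

locale cellular_space =
  fixes G (structure) and M :: "'m set" and act :: "'g \<Rightarrow> 'm \<Rightarrow> 'm" and m0 :: 'm and gc :: "'m \<Rightarrow> 'g"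
  assumes cell_space: "cell_space G M act m0 gc"

sublocale cellular_space \<subseteq> transitive_action G M act
  using cell_space by (simp add: cell_space_def)

sublocale cellular_space \<subseteq> group G
  using group_hom by (simp add: group_hom_def)

context cellular_space
begin

lemma base_point_mem: "m0 \<in> M"
  using cell_space by (simp add: cell_space_def)

lemma coordinate_carrier: "m \<in> M \<Longrightarrow> gc m \<in> carrier G"
  using cell_space by (simp add: cell_space_def)

lemma coordinate_act: "m \<in> M \<Longrightarrow> act (gc m) m0 = m"
  using cell_space by (simp add: cell_space_def)

lemma act_mem: "g \<in> carrier G \<Longrightarrow> x \<in> M \<Longrightarrow> act g x \<in> M"
  using element_image by blast

lemma act_inv_eq:
  assumes "g \<in> carrier G" "x \<in> M" "act g x = y"
  shows "act (inv g) y = x"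
  using orbit_sym_aux[OF assms] .

lemma subgroup_G0: "subgroup (G0 G act m0) G"
  by (rule stabilizer_subgroup[OF base_point_mem])

lemma cosetE:
  assumes "e \<in> cosets G act m0"
  obtains x where "x \<in> carrier G" "e = x <# G0 G act m0"
  using assms by (auto simp: LCOSETS_def)

lemma semi_act_l_coset:
  assumes "m \<in> M" "x \<in> carrier G"
  shows "semi_act G act m0 gc m (x <# G0 G act m0) = act (gc m \<otimes> x) m0"
proof -
  let ?y = "SOME y. y \<in> x <# G0 G act m0"
  have "?y \<in> x <# G0 G act m0"
    using lcos_self[OF assms(2) subgroup_G0] by (rule someI)
  then obtain h where h: "h \<in> G0 G act m0" "?y = x \<otimes> h"
    by (auto simp: l_coset_def)
  have hc: "h \<in> carrier G" and "act h m0 = m0"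
    using h(1) by (auto simp: stabilizer_def)
  then have "act (gc m \<otimes> x \<otimes> h) m0 = act (gc m \<otimes> x) m0"
    using assms coordinate_carrier composition_rule[OF base_point_mem] by simp
  then show ?thesis
    using assms hc coordinate_carrier h(2) by (simp add: semi_act_def m_assoc)
qed

lemma semi_act_mem:
  assumes "m \<in> M" "e \<in> cosets G act m0"
  shows "semi_act G act m0 gc m e \<in> M"
proof -
  obtain x where "x \<in> carrier G" "e = x <# G0 G act m0" using assms(2) by (rule cosetE)
  then show ?thesis
    using assms(1) coordinate_carrier act_mem base_point_mem by (simp add: semi_act_l_coset)
qed

lemma semi_act_G0: "m \<in> M \<Longrightarrow> semi_act G act m0 gc m (G0 G act m0) = m"
  using semi_act_l_coset[of m \<one>] lcos_mult_one[OF stabilizer_subset]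
  by (simp add: coordinate_carrier coordinate_act)

lemma preim_G0: "A \<subseteq> M \<Longrightarrow> preim G M act m0 gc (G0 G act m0) A = A"
  by (auto simp: preim_def semi_act_G0)

lemma erosion_insert_G0:
  "A \<subseteq> M \<Longrightarrow> erosion G M act m0 gc A (insert (G0 G act m0) E) = A \<inter> erosion G M act m0 gc A E"
  by (simp add: erosion_insert preim_G0)

lemma dilation_insert_G0:
  "A \<subseteq> M \<Longrightarrow> dilation G M act m0 gc A (insert (G0 G act m0) E) = A \<union> dilation G M act m0 gc A E"
  by (simp add: dilation_insert preim_G0)

lemma erosion_subset_of_G0_mem:
  "A \<subseteq> M \<Longrightarrow> G0 G act m0 \<in> E \<Longrightarrow> erosion G M act m0 gc A E \<subseteq> A"
  using erosion_insert_G0[of A E] by (metis Int_lower1 insert_absorb)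

lemma subset_dilation_of_G0_mem:
  "A \<subseteq> M \<Longrightarrow> G0 G act m0 \<in> E \<Longrightarrow> A \<subseteq> dilation G M act m0 gc A E"
  using dilation_insert_G0[of A E] by (metis Un_upper1 insert_absorb)

lemma semi_act_Gm:
  assumes "m \<in> M" "m' \<in> M"
  shows "semi_act G act m0 gc m (Gm G act m0 m') = act (gc m) m'"
proof -
  let ?y = "SOME y. y \<in> Gm G act m0 m'"
  have "?y \<in> Gm G act m0 m'"
    by (rule someI[of _ "gc m'"]) (simp add: Gm_def assms(2) coordinate_carrier coordinate_act)
  then show ?thesis
    using assms(1) by (simp add: semi_act_def Gm_def composition_rule base_point_mem coordinate_carrier)
qed


lemma erosion_Diff:
  assumes "E \<subseteq> cosets G act m0"
  shows "erosion G M act m0 gc (M - A) E = M - dilation G M act m0 gc A E"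
  using semi_act_mem assms by (auto simp: erosion_def dilation_def)

lemma dilation_Diff:
  assumes "E \<subseteq> cosets G act m0"
  shows "dilation G M act m0 gc (M - A) E = M - erosion G M act m0 gc A E"
  using semi_act_mem assms unfolding erosion_def dilation_def by blast

lemma card_semi_act_fibre_le:
  assumes fin: "finite (G0 G act m0)" and e: "e \<in> cosets G act m0" and a: "a \<in> M"
  shows "finite {m \<in> M. semi_act G act m0 gc m e = a}"
    and "card {m \<in> M. semi_act G act m0 gc m e = a} \<le> card (G0 G act m0)"
proof -
  let ?S = "{m \<in> M. semi_act G act m0 gc m e = a}"
  obtain x where x: "x \<in> carrier G" "e = x <# G0 G act m0" using e by (rule cosetE)
  obtain k where k: "k \<in> carrier G" "act k m0 = a" using unique_orbit[OF base_point_mem a] by blast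
  define \<phi> where "\<phi> m = inv k \<otimes> (gc m \<otimes> x)" for m
  have into_G0: "\<phi> ` ?S \<subseteq> G0 G act m0"
  proof
    fix y assume "y \<in> \<phi> ` ?S"
    then obtain m where m: "m \<in> M" "act (gc m \<otimes> x) m0 = a" "y = \<phi> m"
      using x semi_act_l_coset by auto
    have "act y m0 = act (inv k) (act (gc m \<otimes> x) m0)"
      using m k x coordinate_carrier by (simp add: \<phi>_def composition_rule base_point_mem)
    then show "y \<in> G0 G act m0"
      using m k x coordinate_carrier act_inv_eq[OF k(1) base_point_mem k(2)]
      by (simp add: stabilizer_def \<phi>_def)
  qed
  have inj: "inj_on \<phi> ?S"
  proof (rule inj_onI)
    fix m m' assume "m \<in> ?S" "m' \<in> ?S" "\<phi> m = \<phi> m'"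
    then have "gc m = gc m'"
      using k x coordinate_carrier by (simp add: \<phi>_def)
    then show "m = m'"
      using \<open>m \<in> ?S\<close> \<open>m' \<in> ?S\<close> coordinate_act by (metis (no_types, lifting) mem_Collect_eq)
  qed
  show "finite ?S" "card ?S \<le> card (G0 G act m0)"
    using inj_on_finite[OF inj into_G0 fin] card_inj_on_le[OF inj into_G0 fin] by simp_all
qed

lemma card_dilation_le:
  assumes "finite (G0 G act m0)" "finite A" "finite E" "A \<subseteq> M" "E \<subseteq> cosets G act m0"
  shows "finite (dilation G M act m0 gc A E)"
    and "card (dilation G M act m0 gc A E) \<le> card (G0 G act m0) * card A * card E"
proof -
  let ?S = "\<lambda>e a. {m \<in> M. semi_act G act m0 gc m e = a}"
  have dilation_UN: "dilation G M act m0 gc A E = (\<Union>e\<in>E. \<Union>a\<in>A. ?S e a)"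
    by (auto simp: dilation_def)
  have fibre: "finite (?S e a)" "card (?S e a) \<le> card (G0 G act m0)" if "e \<in> E" "a \<in> A" for e a
    using card_semi_act_fibre_le that assms by blast+
  show "finite (dilation G M act m0 gc A E)"
    unfolding dilation_UN using assms(2,3) fibre by blast
  have "card (\<Union>e\<in>E. \<Union>a\<in>A. ?S e a) \<le> (\<Sum>e\<in>E. card (\<Union>a\<in>A. ?S e a))"
    by (rule card_UN_le[OF assms(3)])
  also have "\<dots> \<le> (\<Sum>e\<in>E. \<Sum>a\<in>A. card (?S e a))"
    by (intro sum_mono card_UN_le assms(2))
  also have "\<dots> \<le> (\<Sum>e\<in>E. \<Sum>a\<in>A. card (G0 G act m0))"
    by (intro sum_mono fibre)
  finally show "card (dilation G M act m0 gc A E) \<le> card (G0 G act m0) * card A * card E"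
    unfolding dilation_UN by (simp add: mult.commute mult.left_commute)
qed

lemma coordinate_act_eq:
  assumes "g \<in> carrier G" "m \<in> M"
  obtains h where "h \<in> G0 G act m0" "gc (act g m) = g \<otimes> gc m \<otimes> h"
proof
  let ?k = "g \<otimes> gc m"
  define h where "h = inv ?k \<otimes> gc (act g m)"
  have k: "?k \<in> carrier G" "act ?k m0 = act g m"
    using assms coordinate_carrier coordinate_act by (simp_all add: composition_rule base_point_mem)
  have gm: "act g m \<in> M" using assms act_mem by blast
  have "act h m0 = act (inv ?k) (act g m)"
    using k gm coordinate_carrier coordinate_act by (simp add: h_def composition_rule base_point_mem)
  then show "h \<in> G0 G act m0"
    using k gm coordinate_carrier act_inv_eq[OF k(1) base_point_mem k(2)]
    by (simp add: h_def stabilizer_def)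
  show "gc (act g m) = ?k \<otimes> h"
    using k gm coordinate_carrier by (simp add: h_def m_assoc[symmetric])
qed

lemma semi_act_act:
  assumes "g \<in> carrier G" "m \<in> M" "h \<in> G0 G act m0" "gc (act g m) = g \<otimes> gc m \<otimes> h"
    and "e \<in> cosets G act m0"
  shows "semi_act G act m0 gc (act g m) e = act g (semi_act G act m0 gc m (h <# e))"
proof -
  obtain x where x: "x \<in> carrier G" "e = x <# G0 G act m0" using assms(5) by (rule cosetE)
  have h: "h \<in> carrier G" using assms(3) stabilizer_subset by blast
  have "h <# e = (h \<otimes> x) <# G0 G act m0"
    using x h by (simp add: lcos_m_assoc[OF stabilizer_subset])
  then show ?thesis
    using assms(1,2,4) x h coordinate_carrier act_mem
    by (simp add: semi_act_l_coset composition_rule base_point_mem m_assoc)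
qed

lemma image_semi_act_act:
  assumes "g \<in> carrier G" "m \<in> M" "E \<subseteq> cosets G act m0" "stab_mult G act m0 E \<subseteq> E"
  shows "semi_act G act m0 gc (act g m) ` E = act g ` semi_act G act m0 gc m ` E"
proof -
  obtain h where h: "h \<in> G0 G act m0" "gc (act g m) = g \<otimes> gc m \<otimes> h"
    using assms(1,2) by (rule coordinate_act_eq)
  have hc: "h \<in> carrier G" "inv h \<in> carrier G" "inv h \<in> G0 G act m0"
    using h(1) stabilizer_subset subgroup.m_inv_closed[OF subgroup_G0] by auto
  have closed: "k <# e \<in> E" if "k \<in> G0 G act m0" "e \<in> E" for k e
    using assms(4) that by (auto simp: stab_mult_def)
  have sa: "semi_act G act m0 gc (act g m) e = act g (semi_act G act m0 gc m (h <# e))"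
    if "e \<in> E" for e
    using semi_act_act[OF assms(1,2) h] that assms(3) by blast
  show ?thesis
  proof
    show "semi_act G act m0 gc (act g m) ` E \<subseteq> act g ` semi_act G act m0 gc m ` E"
      using sa closed[OF h(1)] by blast
    show "act g ` semi_act G act m0 gc m ` E \<subseteq> semi_act G act m0 gc (act g m) ` E"
    proof clarify
      fix e assume e: "e \<in> E"
      have "h <# (inv h <# e) = e"
        using e assms(3) hc lcosets_subset_PowG[OF subgroup_G0]
        by (auto simp: lcos_m_assoc lcos_mult_one)
      then show "act g (semi_act G act m0 gc m e) \<in> semi_act G act m0 gc (act g m) ` E"
        using sa[OF closed[OF hc(3) e]] closed[OF hc(3) e] by (metis image_eqI)
    qed
  qed
qed

lemma bij_betw_act: "g \<in> carrier G \<Longrightarrow> bij_betw (act g) M M"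
  using bij_prop0 by (simp add: Bij_def)

lemma image_erosion:
  assumes "g \<in> carrier G" "A \<subseteq> M" "E \<subseteq> cosets G act m0" "stab_mult G act m0 E \<subseteq> E"
  shows "act g ` erosion G M act m0 gc A E = erosion G M act m0 gc (act g ` A) E"
  unfolding erosion_def
proof (rule image_Collect_eq_bij[OF bij_betw_act[OF assms(1)]])
  fix m assume m: "m \<in> M"
  have "semi_act G act m0 gc m ` E \<subseteq> M" using m assms(3) semi_act_mem by blast
  then show "semi_act G act m0 gc (act g m) ` E \<subseteq> act g ` A \<longleftrightarrow> semi_act G act m0 gc m ` E \<subseteq> A"
    unfolding image_semi_act_act[OF assms(1) m assms(3,4)]
    using inj_on_image_subset_iff[OF inj_prop[OF assms(1)]] assms(2) by blast
qed

lemma image_dilation: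
  assumes "g \<in> carrier G" "A \<subseteq> M" "E \<subseteq> cosets G act m0" "stab_mult G act m0 E \<subseteq> E"
  shows "act g ` dilation G M act m0 gc A E = dilation G M act m0 gc (act g ` A) E"
  unfolding dilation_def
proof (rule image_Collect_eq_bij[OF bij_betw_act[OF assms(1)]])
  fix m assume m: "m \<in> M"
  have "semi_act G act m0 gc m ` E \<subseteq> M" using m assms(3) semi_act_mem by blast
  then have "act g ` (semi_act G act m0 gc m ` E \<inter> A) = act g ` semi_act G act m0 gc m ` E \<inter> act g ` A"
    using inj_on_image_Int[OF inj_prop[OF assms(1)]] assms(2) by blast
  then show "semi_act G act m0 gc (act g m) ` E \<inter> act g ` A \<noteq> {} \<longleftrightarrow>
      semi_act G act m0 gc m ` E \<inter> A \<noteq> {}"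
    using image_semi_act_act[OF assms(1) m assms(3,4)] by (metis image_is_empty)
qed

lemma image_boundary:
  assumes "g \<in> carrier G" "A \<subseteq> M" "E \<subseteq> cosets G act m0" "stab_mult G act m0 E \<subseteq> E"
  shows "act g ` boundary G M act m0 gc A E = boundary G M act m0 gc (act g ` A) E"
  unfolding boundary_def image_erosion[OF assms, symmetric] image_dilation[OF assms, symmetric]
  by (rule inj_on_image_set_diff[OF inj_prop[OF assms(1)]]) (auto simp: erosion_def dilation_def)

lemma image_semi_act_Gm:
  assumes "m \<in> M" "X \<subseteq> M"
  shows "semi_act G act m0 gc m ` Gm G act m0 ` X = act (gc m) ` X"
  using assms semi_act_Gm by (auto simp: image_image intro!: image_cong)

end
theorem lemma1:
  fixes g :: 'g and m :: 'm and G :: "('g, 'b) monoid_scheme" and M :: "'m set" and act :: "'g \<Rightarrow> 'm \<Rightarrow> 'm"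
    and m0 :: 'm and gc :: "'m \<Rightarrow> 'g" and A :: "'m set" and e :: "'g set"
    and E E' :: "'g set set"
  assumes R: "cell_space G M act m0 gc"
    and A: "A \<subseteq> M"
    and e: "e \<in> cosets G act m0"
    and E: "E \<subseteq> cosets G act m0"
    and E': "E' \<subseteq> cosets G act m0"
  defines "Er \<equiv> erosion G M act m0 gc"
    and "Di \<equiv> dilation G M act m0 gc"
    and "Bd \<equiv> boundary G M act m0 gc"
    and "Pre \<equiv> preim G M act m0 gc"
    and "H \<equiv> G0 G act m0"
    and "\<iota> \<equiv> Gm G act m0"
  shows
    "
    \<comment> \<open>(1)\<close>
    (Er A {H} = A \<and> Di A {H} = A \<and> Bd A {H} = {})
    \<and>
    \<comment> \<open>(2)\<close>
    (Er A {H, e} = A \<inter> Pre e A \<and> Di A {H, e} = A \<union> Pre e A \<and>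
     Bd A {H, e} = (A - Pre e A) \<union> (Pre e A - A))
    \<and>
    \<comment> \<open>(3)\<close>
    (Er (M - A) E = M - Di A E \<and> Di (M - A) E = M - Er A E)
    \<and>
    \<comment> \<open>(4)\<close>
    (E \<subseteq> E' \<longrightarrow> Er A E' \<subseteq> Er A E \<and> Di A E \<subseteq> Di A E' \<and> Bd A E \<subseteq> Bd A E')
    \<and>
    \<comment> \<open>(5)\<close>
    (H \<in> E \<longrightarrow> Er A E \<subseteq> A \<and> A \<subseteq> Di A E)
    \<and>
    \<comment> \<open>(6)\<close>
    (H \<in> E \<longrightarrow> finite A \<longrightarrow> finite (Er A E))
    \<and>
    \<comment> \<open>(7)\<close>
    (finite H \<longrightarrow> finite A \<longrightarrow> finite E \<longrightarrow>
       finite (Di A E) \<and> finite (Bd A E) \<and> card (Di A E) \<le> card H * card A * card E)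
    \<and>
    \<comment> \<open>(8)\<close>
    (g \<in> carrier G \<longrightarrow> stab_mult G act m0 E \<subseteq> E \<longrightarrow>
       act g ` Er A E = Er (act g ` A) E \<and> act g ` Di A E = Di (act g ` A) E \<and>
       act g ` Bd A E = Bd (act g ` A) E)
    \<and>
    \<comment> \<open>(9)\<close>
    (m \<in> M \<longrightarrow> stab_mult G act m0 E \<subseteq> E \<longrightarrow>
       semi_act G act m0 gc m ` \<iota> ` Er A E = Er (semi_act G act m0 gc m ` \<iota> ` A) E \<and>
       semi_act G act m0 gc m ` \<iota> ` Di A E = Di (semi_act G act m0 gc m ` \<iota> ` A) E \<and>
       semi_act G act m0 gc m ` \<iota> ` Bd A E = Bd (semi_act G act m0 gc m ` \<iota> ` A) E)"
proof -
  interpret cellular_space G M act m0 gc using R by (rule cellular_space.intro)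
  note defs = Er_def Di_def Bd_def Pre_def H_def \<iota>_def
  have G0: "Er A {H} = A" "Di A {H} = A"
    using preim_G0[OF A] by (simp_all add: defs erosion_singleton dilation_singleton)
  have pair: "Er A {H, e} = A \<inter> Pre e A" "Di A {H, e} = A \<union> Pre e A"
    using A by (simp_all add: defs erosion_insert_G0 dilation_insert_G0 erosion_singleton dilation_singleton)
  have equivariance: "act g' ` Er A E = Er (act g' ` A) E \<and> act g' ` Di A E = Di (act g' ` A) E \<and>
      act g' ` Bd A E = Bd (act g' ` A) E" if "g' \<in> carrier G" "stab_mult G act m0 E \<subseteq> E" for g'
    using image_erosion[OF that(1) A E that(2)] image_dilation[OF that(1) A E that(2)]
      image_boundary[OF that(1) A E that(2)] unfolding defs by blast
  show ?thesis
  proof (intro conjI impI)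
    show "Er (M - A) E = M - Di A E" "Di (M - A) E = M - Er A E"
      by (simp_all add: defs erosion_Diff[OF E] dilation_Diff[OF E])
    show "finite (Di A E)" "card (Di A E) \<le> card H * card A * card E"
      if "finite H" "finite A" "finite E"
      using card_dilation_le[OF _ _ _ A E] that unfolding defs by blast+
    then show "finite (Bd A E)" if "finite H" "finite A" "finite E"
      using that by (simp add: defs boundary_def)
    show "semi_act G act m0 gc m ` \<iota> ` Er A E = Er (semi_act G act m0 gc m ` \<iota> ` A) E"
      "semi_act G act m0 gc m ` \<iota> ` Di A E = Di (semi_act G act m0 gc m ` \<iota> ` A) E"
      "semi_act G act m0 gc m ` \<iota> ` Bd A E = Bd (semi_act G act m0 gc m ` \<iota> ` A) E"
      if "m \<in> M" "stab_mult G act m0 E \<subseteq> E"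
      using equivariance[OF coordinate_carrier[OF that(1)] that(2)] that(1) A
      by (simp_all add: defs image_semi_act_Gm erosion_subset dilation_subset boundary_subset)
    show "Er A E' \<subseteq> Er A E" "Di A E \<subseteq> Di A E'" "Bd A E \<subseteq> Bd A E'" if "E \<subseteq> E'"
      using that by (simp_all add: defs erosion_antimono dilation_mono boundary_mono)
    show "Er A E \<subseteq> A" "A \<subseteq> Di A E" if "H \<in> E"
      using A that by (simp_all add: defs erosion_subset_of_G0_mem subset_dilation_of_G0_mem)
    show "finite (Er A E)" if "H \<in> E" "finite A"
      using erosion_subset_of_G0_mem[OF A] finite_subset that unfolding defs by blast
  qed (use G0 pair equivariance in \<open>auto simp: defs boundary_def\<close>)
qed

end
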